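(* Let $(\mathcal L,[\,,\,])$ be a Lie algebra over a field $\mathbf{k}$, $k\in\mathbf{k}$ nonzero, and $H:=\mathcal U^{6\text{-th}}_k(\mathcal L)$ its enveloping$^{6\text{-th}}$ algebra (constructed in the context), with multiplication $m$, unit map $u$, distinguished idempotent $q$, and with $x\in\mathcal L$ identified with its image in $H$. Define $\sigma:H\to H$ by $\sigma(a):=a+qa-aq$. Then $H$ is a Hopf-like$^{6\text{-th}}$ algebra: there are linear maps $\Delta:H\to H\otimes H$, $\varepsilon:H\to\mathbf{k}$ and $S:H\to H$ such that $H$ with $(m,u,\Delta,\varepsilon,\sigma)$ is a bialgebra with $\sigma$-counit, $S$ is an antipode$^{6\text{-th}}$-like, and $$\Delta(q)=q\otimes q,\quad \Delta(x)=(x+kqx-xq)\otimes1+1\otimes(x+kqx-xq)+(1-k)qx\otimes q+(1-k)q\otimes qx,$$ $$\varepsilon(q)=1,\quad\varepsilon(x)=0,\quad S(q)=1-q,\quad S(x)=-\tfrac1k x-kqx+\tfrac1k xq\qquad(x\in\mathcal L).$$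
   Context: Construction of $H$: take a basis $X=\{x_j\}$ of $\mathcal L$, a symbol $\tilde q\notin X$, $V$ with basis $X\cup\{\tilde q\}$, $I\subseteq T(V)$ the ideal generated by $\tilde q\otimes\tilde q-\tilde q$ and $\tilde q\otimes a\otimes\tilde q-\tilde q\otimes a$ ($a\in T(V)$), $\hat A=T(V)/I$, $\hat q=\tilde q+I$, $x\mapsto\hat x$ the linear extension of $x_j\mapsto x_j+I$; $R$ the ideal of $\hat A$ generated by $\widehat{[x,y]}-\hat x\hat y+\hat y\hat x+\hat x\hat y\hat q-\hat y\hat x\hat q-k\hat x\hat q\hat y+k\hat y\hat q\hat x$ ($x,y\in\mathcal L$); $H=\hat A/R$, $q=\hat q+R$, $x$ denotes $\hat x+R$. Bialgebra with $\sigma$-counit: an associative algebra $H$ over $\mathbf{k}$ with linear maps $m,u,\Delta,\varepsilon,\sigma$ such that $m$ is associative with unit $u(1)$; $\Delta$ is coassociative, $(\Delta\otimes id)\Delta=(id\otimes\Delta)\Delta$; $(\varepsilon\otimes id)\Delta(h)=1\otimes\sigma(h)$ and $(id\otimes\varepsilon)\Delta(h)=\sigma(h)\otimes1$ for all $h$; $\Delta\circ m=(m\otimes m)(id\otimes\tau\otimes id)(\Delta\otimes\Delta)$ and $\Delta(u(1))=u(1)\otimes u(1)$ ($\tau$ the twist $v\otimes w\mapsto w\otimes v$); $\varepsilon(ab)=\varepsilon(a)\varepsilon(b)$ and $\varepsilon(u(1))=1$. It is Hopf-like$^{6\text{-th}}$ if there is a linear $S:H\to H$ (an antipode$^{6\text{-th}}$-like)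 with $m(S\otimes id)\Delta=u\circ\varepsilon\circ S=m(id\otimes S)\Delta$. *)

theory Defs
  imports Complex_Main "HOL-Library.Poly_Mapping"
begin

definition lie_algebra :: "('k::field \<Rightarrow> 'a::ab_group_add \<Rightarrow> 'a) \<Rightarrow> ('a \<Rightarrow> 'a \<Rightarrow> 'a) \<Rightarrow> bool" where
  "lie_algebra scale br \<longleftrightarrow> vector_space scale
     \<and> (\<forall>x y z. br (x + y) z = br x z + br y z)
     \<and> (\<forall>x y z. br x (y + z) = br x y + br x z)
     \<and> (\<forall>c x y. br (scale c x) y = scale c (br x y))
     \<and> (\<forall>c x y. br x (scale c y) = scale c (br x y))
     \<and> (\<forall>x. br x x = 0)
     \<and> (\<forall>x y z. br x (br y z) + br y (br z x) + br z (br x y) = 0)"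

definition smult_pm :: "'k::comm_ring_1 \<Rightarrow> ('w \<Rightarrow>\<^sub>0 'k) \<Rightarrow> ('w \<Rightarrow>\<^sub>0 'k)" where
  "smult_pm c f = Poly_Mapping.map (\<lambda>a. c * a) f"

definition lext :: "('w \<Rightarrow> ('v \<Rightarrow>\<^sub>0 'k::comm_ring_1)) \<Rightarrow> ('w \<Rightarrow>\<^sub>0 'k) \<Rightarrow> ('v \<Rightarrow>\<^sub>0 'k)" where
  "lext \<phi> f = (\<Sum>w\<in>Poly_Mapping.keys f. smult_pm (Poly_Mapping.lookup f w) (\<phi> w))"

definition wd :: "'w \<Rightarrow> ('w \<Rightarrow>\<^sub>0 'k::comm_ring_1)" where
  "wd w = Poly_Mapping.single w 1"

text \<open>Multiplication in the free associative algebra on letters 'l (basis: words,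
product: concatenation).\<close>
definition pmul :: "('l list \<Rightarrow>\<^sub>0 'k::comm_ring_1) \<Rightarrow> ('l list \<Rightarrow>\<^sub>0 'k) \<Rightarrow> ('l list \<Rightarrow>\<^sub>0 'k)" where
  "pmul f g = (\<Sum>u\<in>Poly_Mapping.keys f. \<Sum>v\<in>Poly_Mapping.keys g. Poly_Mapping.single (u @ v) (Poly_Mapping.lookup f u * Poly_Mapping.lookup g v))"

text \<open>Tensor product of elements of free vector spaces (basis of the tensor
product: pairs of basis elements).\<close>
definition tens :: "('u \<Rightarrow>\<^sub>0 'k::comm_ring_1) \<Rightarrow> ('v \<Rightarrow>\<^sub>0 'k) \<Rightarrow> ('u \<times> 'v \<Rightarrow>\<^sub>0 'k)" where
  "tens f g = (\<Sum>u\<in>Poly_Mapping.keys f. \<Sum>v\<in>Poly_Mapping.keys g. Poly_Mapping.single (u, v) (Poly_Mapping.lookup f u * Poly_Mapping.lookup g v))"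

definition tensL :: "('u \<times> 'v \<Rightarrow>\<^sub>0 'k::comm_ring_1) \<Rightarrow> ('w \<Rightarrow>\<^sub>0 'k) \<Rightarrow> ('u \<times> 'v \<times> 'w \<Rightarrow>\<^sub>0 'k)" where
  "tensL f g = (\<Sum>p\<in>Poly_Mapping.keys f. \<Sum>w\<in>Poly_Mapping.keys g. Poly_Mapping.single (fst p, snd p, w) (Poly_Mapping.lookup f p * Poly_Mapping.lookup g w))"

definition pmul2 :: "('l list \<times> 'l list \<Rightarrow>\<^sub>0 'k::comm_ring_1) \<Rightarrow> ('l list \<times> 'l list \<Rightarrow>\<^sub>0 'k)
     \<Rightarrow> ('l list \<times> 'l list \<Rightarrow>\<^sub>0 'k)" where
  "pmul2 f g = (\<Sum>p\<in>Poly_Mapping.keys f. \<Sum>r\<in>Poly_Mapping.keys g.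
       Poly_Mapping.single (fst p @ fst r, snd p @ snd r) (Poly_Mapping.lookup f p * Poly_Mapping.lookup g r))"

inductive_set span_pm :: "('w \<Rightarrow>\<^sub>0 'k::comm_ring_1) set \<Rightarrow> ('w \<Rightarrow>\<^sub>0 'k) set" for S where
  span_pm_zero: "0 \<in> span_pm S"
| span_pm_base: "a \<in> S \<Longrightarrow> a \<in> span_pm S"
| span_pm_add: "a \<in> span_pm S \<Longrightarrow> b \<in> span_pm S \<Longrightarrow> a + b \<in> span_pm S"
| span_pm_smult: "a \<in> span_pm S \<Longrightarrow> smult_pm c a \<in> span_pm S"

inductive_set ideal_gen :: "('l list \<Rightarrow>\<^sub>0 'k::comm_ring_1) set \<Rightarrow> ('l list \<Rightarrow>\<^sub>0 'k) set" for G where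
  ideal_gen_base: "g \<in> G \<Longrightarrow> g \<in> ideal_gen G"
| ideal_gen_zero: "0 \<in> ideal_gen G"
| ideal_gen_add: "a \<in> ideal_gen G \<Longrightarrow> b \<in> ideal_gen G \<Longrightarrow> a + b \<in> ideal_gen G"
| ideal_gen_smult: "a \<in> ideal_gen G \<Longrightarrow> smult_pm c a \<in> ideal_gen G"
| ideal_gen_mult: "a \<in> ideal_gen G \<Longrightarrow> pmul (wd u) (pmul a (wd v)) \<in> ideal_gen G"

text \<open>Letters: Some x for x in L, and None for the symbol q~.  The free algebra F
on these letters, modulo the linearity relations of the letters Some x, is the
tensor algebra T(V) with V = L \<oplus> k q~.  The kernel of F \<rightarrow> H is the ideal
generated by: the linearity relations (giving T(V)), the relations of I, and
(lifts of) the generators of R.\<close>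

definition env6_gens :: "('k::field \<Rightarrow> 'a::ab_group_add \<Rightarrow> 'a) \<Rightarrow> ('a \<Rightarrow> 'a \<Rightarrow> 'a) \<Rightarrow> 'k
     \<Rightarrow> ('a option list \<Rightarrow>\<^sub>0 'k) set" where
  "env6_gens scale br k =
     {wd [Some (x + y)] - wd [Some x] - wd [Some y] | x y. True}
   \<union> {wd [Some (scale c x)] - smult_pm c (wd [Some x]) | c x. True}
   \<union> {wd ([None] @ w @ [None]) - wd ([None] @ w) | w. True}
   \<union> {wd [Some (br x y)] - wd [Some x, Some y] + wd [Some y, Some x]
        + wd [Some x, Some y, None] - wd [Some y, Some x, None]
        - smult_pm k (wd [Some x, None, Some y]) + smult_pm k (wd [Some y, None, Some x]) | x y. True}"

definition env6_ker :: "('k::field \<Rightarrow> 'a::ab_group_add \<Rightarrow> 'a) \<Rightarrow> ('a \<Rightarrow> 'a \<Rightarrow> 'a) \<Rightarrow> 'k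
     \<Rightarrow> ('a option list \<Rightarrow>\<^sub>0 'k) set" where
  "env6_ker scale br k = ideal_gen (env6_gens scale br k)"

text \<open>Kernel of F\<otimes>F \<rightarrow> H\<otimes>H, namely J\<otimes>F + F\<otimes>J.\<close>
definition ker2 :: "('l list \<Rightarrow>\<^sub>0 'k::comm_ring_1) set \<Rightarrow> ('l list \<times> 'l list \<Rightarrow>\<^sub>0 'k) set" where
  "ker2 J = span_pm {tens a b | a b. a \<in> J \<or> b \<in> J}"

text \<open>Kernel of F\<otimes>F\<otimes>F \<rightarrow> H\<otimes>H\<otimes>H.\<close>
definition ker3 :: "('l list \<Rightarrow>\<^sub>0 'k::comm_ring_1) set \<Rightarrow> ('l list \<times> 'l list \<times> 'l list \<Rightarrow>\<^sub>0 'k) set" where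
  "ker3 J = span_pm {tens a (tens b c) | a b c. a \<in> J \<or> b \<in> J \<or> c \<in> J}"

abbreviation one6 :: "('a option list \<Rightarrow>\<^sub>0 'k::comm_ring_1)" where "one6 \<equiv> wd []"
abbreviation q6 :: "('a option list \<Rightarrow>\<^sub>0 'k::comm_ring_1)" where "q6 \<equiv> wd [None]"
abbreviation lie6 :: "'a \<Rightarrow> ('a option list \<Rightarrow>\<^sub>0 'k::comm_ring_1)" where "lie6 x \<equiv> wd [Some x]"

definition sigma6 :: "('a option list \<Rightarrow>\<^sub>0 'k::comm_ring_1) \<Rightarrow> ('a option list \<Rightarrow>\<^sub>0 'k)" where
  "sigma6 a = a + pmul q6 a - pmul a q6"

text \<open>All maps on H, H\<otimes>H are given by linear lifts on F resp. F\<otimes>F that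
respect the kernels; identities in H (resp. H\<otimes>H, H\<otimes>H\<otimes>H) are congruences
modulo J (resp. ker2 J, ker3 J).  Maps D, e, S, s are lifts of \<Delta>, \<epsilon>, S, \<sigma>.\<close>

definition well_defined_maps :: "('l list \<Rightarrow>\<^sub>0 'k::field) set
     \<Rightarrow> (('l list \<Rightarrow>\<^sub>0 'k) \<Rightarrow> ('l list \<times> 'l list \<Rightarrow>\<^sub>0 'k)) \<Rightarrow> (('l list \<Rightarrow>\<^sub>0 'k) \<Rightarrow> 'k)
     \<Rightarrow> (('l list \<Rightarrow>\<^sub>0 'k) \<Rightarrow> ('l list \<Rightarrow>\<^sub>0 'k)) \<Rightarrow> bool" where
  "well_defined_maps J D e S \<longleftrightarrow>
     Vector_Spaces.linear smult_pm smult_pm D \<and> Vector_Spaces.linear smult_pm (*) e \<and> Vector_Spaces.linear smult_pm smult_pm S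
   \<and> (\<forall>a\<in>J. D a \<in> ker2 J) \<and> (\<forall>a\<in>J. e a = 0) \<and> (\<forall>a\<in>J. S a \<in> J)"

definition bialgebra_sigma_counit :: "('l list \<Rightarrow>\<^sub>0 'k::field) set
     \<Rightarrow> (('l list \<Rightarrow>\<^sub>0 'k) \<Rightarrow> ('l list \<times> 'l list \<Rightarrow>\<^sub>0 'k)) \<Rightarrow> (('l list \<Rightarrow>\<^sub>0 'k) \<Rightarrow> 'k)
     \<Rightarrow> (('l list \<Rightarrow>\<^sub>0 'k) \<Rightarrow> ('l list \<Rightarrow>\<^sub>0 'k)) \<Rightarrow> bool" where
  "bialgebra_sigma_counit J D e s \<longleftrightarrow>
     \<comment> \<open>m associative with unit u(1)\<close>
     (\<forall>a b c. pmul (pmul a b) c - pmul a (pmul b c) \<in> J)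
   \<and> (\<forall>a. pmul (wd []) a - a \<in> J \<and> pmul a (wd []) - a \<in> J)
     \<comment> \<open>coassociativity (\<Delta>\<otimes>id)\<Delta> = (id\<otimes>\<Delta>)\<Delta>\<close>
   \<and> (\<forall>h. lext (\<lambda>(u, v). tensL (D (wd u)) (wd v)) (D h)
           - lext (\<lambda>(u, v). tens (wd u) (D (wd v))) (D h) \<in> ker3 J)
     \<comment> \<open>\<sigma>-counit: (\<epsilon>\<otimes>id)\<Delta>(h) = 1\<otimes>\<sigma>(h), (id\<otimes>\<epsilon>)\<Delta>(h) = \<sigma>(h)\<otimes>1\<close>
   \<and> (\<forall>h. lext (\<lambda>(u, v). smult_pm (e (wd u)) (wd v)) (D h) - s h \<in> J)
   \<and> (\<forall>h. lext (\<lambda>(u, v). smult_pm (e (wd v)) (wd u)) (D h) - s h \<in> J)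
     \<comment> \<open>\<Delta> multiplicative and unital\<close>
   \<and> (\<forall>a b. D (pmul a b) - pmul2 (D a) (D b) \<in> ker2 J)
   \<and> D (wd []) - tens (wd []) (wd []) \<in> ker2 J
     \<comment> \<open>\<epsilon> multiplicative and unital\<close>
   \<and> (\<forall>a b. e (pmul a b) = e a * e b)
   \<and> e (wd []) = 1"

definition antipode6_like :: "('l list \<Rightarrow>\<^sub>0 'k::field) set
     \<Rightarrow> (('l list \<Rightarrow>\<^sub>0 'k) \<Rightarrow> ('l list \<times> 'l list \<Rightarrow>\<^sub>0 'k)) \<Rightarrow> (('l list \<Rightarrow>\<^sub>0 'k) \<Rightarrow> 'k)
     \<Rightarrow> (('l list \<Rightarrow>\<^sub>0 'k) \<Rightarrow> ('l list \<Rightarrow>\<^sub>0 'k)) \<Rightarrow> bool" where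
  "antipode6_like J D e S \<longleftrightarrow>
     (\<forall>h. lext (\<lambda>(u, v). pmul (S (wd u)) (wd v)) (D h) - smult_pm (e (S h)) (wd []) \<in> J)
   \<and> (\<forall>h. lext (\<lambda>(u, v). pmul (wd u) (S (wd v))) (D h) - smult_pm (e (S h)) (wd []) \<in> J)"

end

theory Submission
  imports Defs
begin

text \<open>
  All structure maps are defined on the free algebra over the letters L \<union> {q~}: \<Delta> and \<epsilon> as
  algebra homomorphisms and S as an anti-homomorphism, each determined by its values on letters.
  They descend to H because they map every generator of the defining ideal into the
  corresponding kernel; for the generators q u q - q u this is immediate, for the Lie relations it is
  an explicit computation. Every bialgebra and antipode identity is likewise verified on single
  letters by computing modulo the relations q u q = q u, which a normal form keeping only the first
  q makes effective, and then propagated to all words by (anti-)multiplicativity. The right counit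
  identity follows from the left one because \<Delta> is cocommutative.
\<close>


section \<open>Free modules and products defined on basis elements\<close>

lemma lookup_smult_pm [simp]:
  "Poly_Mapping.lookup (smult_pm c f) w = c * Poly_Mapping.lookup f w"
  unfolding smult_pm_def by (simp add: Poly_Mapping.map.rep_eq when_def)

lemma smult_pm_single [simp]: "smult_pm c (Poly_Mapping.single w d) = Poly_Mapping.single w (c * d)"
  by (rule poly_mapping_eqI) (simp add: lookup_single when_def)

interpretation smult_pm: module "smult_pm :: 'k::comm_ring_1 \<Rightarrow> ('w \<Rightarrow>\<^sub>0 'k) \<Rightarrow> ('w \<Rightarrow>\<^sub>0 'k)"
  by unfold_locales (auto intro!: poly_mapping_eqI simp: lookup_add algebra_simps)

lemma module_times: "module ((*) :: 'k::comm_ring_1 \<Rightarrow> 'k \<Rightarrow> 'k)"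
  by unfold_locales (simp_all add: algebra_simps)

lemma wd_eq_single: "wd w = Poly_Mapping.single w 1"
  by (simp add: wd_def)

lemma poly_mapping_expansion:
  "f = (\<Sum>w\<in>Poly_Mapping.keys f. Poly_Mapping.single w (Poly_Mapping.lookup f w))"
proof -
  have "finite I \<Longrightarrow> Poly_Mapping.lookup (\<Sum>i\<in>I. Poly_Mapping.single i (Poly_Mapping.lookup f i)) j
          = (if j \<in> I then Poly_Mapping.lookup f j else 0)" for I j
    by (induction I rule: finite_induct) (auto simp: lookup_single lookup_add when_def)
  then show ?thesis
    by (intro poly_mapping_eqI) (fastforce simp: in_keys_iff)
qed

lemma poly_mapping_induct [case_names zero single add]:
  assumes "P 0" "\<And>w c. P (Poly_Mapping.single w c)" "\<And>a b. P a \<Longrightarrow> P b \<Longrightarrow> P (a + b)"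
  shows "P (f :: 'a \<Rightarrow>\<^sub>0 'b::comm_monoid_add)"
proof -
  have "finite I \<Longrightarrow> P (\<Sum>w\<in>I. Poly_Mapping.single w (Poly_Mapping.lookup f w))" for I
    by (induction I rule: finite_induct) (auto intro: assms)
  then show ?thesis
    by (subst poly_mapping_expansion) simp
qed

lemma sum_keys_superset:
  assumes "finite A" "Poly_Mapping.keys f \<subseteq> A" "\<And>w. g w 0 = 0"
  shows "(\<Sum>w\<in>Poly_Mapping.keys f. g w (Poly_Mapping.lookup f w))
       = (\<Sum>w\<in>A. g w (Poly_Mapping.lookup f w))"
  using assms by (intro sum.mono_neutral_left) (auto simp: in_keys_iff)

lemma sum_keys_add:
  assumes "\<And>w. g w 0 = 0" "\<And>w a b. g w (a + b) = g w a + g w b"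
  shows "(\<Sum>w\<in>Poly_Mapping.keys (f + f'). g w (Poly_Mapping.lookup (f + f') w))
       = (\<Sum>w\<in>Poly_Mapping.keys f. g w (Poly_Mapping.lookup f w))
         + (\<Sum>w\<in>Poly_Mapping.keys f'. g w (Poly_Mapping.lookup f' w))"
proof -
  let ?A = "Poly_Mapping.keys f \<union> Poly_Mapping.keys f'"
  have "(\<Sum>w\<in>Poly_Mapping.keys (f + f'). g w (Poly_Mapping.lookup (f + f') w))
      = (\<Sum>w\<in>?A. g w (Poly_Mapping.lookup (f + f') w))"
    using assms(1) keys_add[of f f'] by (intro sum_keys_superset) auto
  also have "\<dots> = (\<Sum>w\<in>?A. g w (Poly_Mapping.lookup f w)) + (\<Sum>w\<in>?A. g w (Poly_Mapping.lookup f' w))"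
    by (simp add: lookup_add assms(2) sum.distrib)
  also have "\<dots> = (\<Sum>w\<in>Poly_Mapping.keys f. g w (Poly_Mapping.lookup f w))
         + (\<Sum>w\<in>Poly_Mapping.keys f'. g w (Poly_Mapping.lookup f' w))"
    using assms(1) sum_keys_superset[of ?A f g] sum_keys_superset[of ?A f' g] by simp
  finally show ?thesis .
qed

interpretation lext: module_hom smult_pm smult_pm "lext \<phi>" for \<phi>
proof unfold_locales
  show "lext \<phi> (f + g) = lext \<phi> f + lext \<phi> g" for f g
    unfolding lext_def by (rule sum_keys_add) (simp_all add: smult_pm.scale_left_distrib)
  show "lext \<phi> (smult_pm c f) = smult_pm c (lext \<phi> f)" for c f
    unfolding lext_def smult_pm.scale_sum_right
    by simp (rule sum.mono_neutral_left; auto simp: in_keys_iff)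
qed

lemma lext_single [simp]: "lext \<phi> (Poly_Mapping.single w c) = smult_pm c (\<phi> w)"
  unfolding lext_def by (cases "c = 0") simp_all

lemma lext_wd [simp]: "lext \<phi> (wd w) = \<phi> w"
  by (simp add: wd_eq_single)

lemma lext_pointwise_add: "lext (\<lambda>w. \<phi> w + \<psi> w) f = lext \<phi> f + lext \<psi> f"
  by (induction f rule: poly_mapping_induct) (simp_all add: lext.add smult_pm.scale_right_distrib)

lemma lext_pointwise_scale: "lext (\<lambda>w. smult_pm c (\<phi> w)) f = smult_pm c (lext \<phi> f)"
  by (induction f rule: poly_mapping_induct)
     (simp_all add: lext.add smult_pm.scale_right_distrib mult.commute)

locale basis_product =
  fixes h :: "'u \<Rightarrow> 'v \<Rightarrow> 'w"
    and prod :: "('u \<Rightarrow>\<^sub>0 'k::comm_ring_1) \<Rightarrow> ('v \<Rightarrow>\<^sub>0 'k) \<Rightarrow> ('w \<Rightarrow>\<^sub>0 'k)"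
  assumes prod_eq: "prod f g = (\<Sum>u\<in>Poly_Mapping.keys f. \<Sum>v\<in>Poly_Mapping.keys g.
             Poly_Mapping.single (h u v) (Poly_Mapping.lookup f u * Poly_Mapping.lookup g v))"
begin

lemma prod_eq_lext: "prod f g = lext (\<lambda>u. lext (\<lambda>v. Poly_Mapping.single (h u v) 1) g) f"
  by (simp add: prod_eq lext_def smult_pm.scale_sum_right mult.commute)

lemma single [simp]:
  "prod (Poly_Mapping.single u a) (Poly_Mapping.single v b) = Poly_Mapping.single (h u v) (a * b)"
  by (simp add: prod_eq_lext mult.commute)

lemma add_left: "prod (f + f') g = prod f g + prod f' g"
  by (simp add: prod_eq_lext lext.add)

lemma add_right: "prod f (g + g') = prod f g + prod f g'"
  by (simp add: prod_eq_lext lext.add lext_pointwise_add)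

lemma scale_left: "prod (smult_pm c f) g = smult_pm c (prod f g)"
  by (simp add: prod_eq_lext lext.scale)

lemma scale_right: "prod f (smult_pm c g) = smult_pm c (prod f g)"
  by (simp add: prod_eq_lext lext.scale lext_pointwise_scale)

lemma zero_left [simp]: "prod 0 g = 0"
  by (simp add: prod_eq)

lemma zero_right [simp]: "prod f 0 = 0"
  by (simp add: prod_eq)

lemma minus_left: "prod (- f) g = - prod f g"
  using scale_left[of "- 1" f g] by simp

lemma minus_right: "prod f (- g) = - prod f g"
  using scale_right[of f "- 1" g] by simp

lemma diff_left: "prod (f - f') g = prod f g - prod f' g"
  using add_left[of f "- f'" g] by (simp add: minus_left)

lemma diff_right: "prod f (g - g') = prod f g - prod f g'"
  using add_right[of f g "- g'"] by (simp add: minus_right)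

lemma module_hom_left: "module_hom smult_pm smult_pm (\<lambda>f. prod f g)"
  by unfold_locales (simp_all add: add_left scale_left)

lemma module_hom_right: "module_hom smult_pm smult_pm (\<lambda>g. prod f g)"
  by unfold_locales (simp_all add: add_right scale_right)

end

interpretation pmul: basis_product append pmul
  by unfold_locales (simp add: pmul_def)

interpretation tens: basis_product Pair tens
  by unfold_locales (simp add: tens_def)

interpretation tensL: basis_product "\<lambda>p w. (fst p, snd p, w)" tensL
  by unfold_locales (simp add: tensL_def)

interpretation pmul2: basis_product "\<lambda>p r. (fst p @ fst r, snd p @ snd r)" pmul2
  by unfold_locales (simp add: pmul2_def)

definition pmul3 :: "('l list \<times> 'l list \<times> 'l list \<Rightarrow>\<^sub>0 'k::comm_ring_1)
    \<Rightarrow> ('l list \<times> 'l list \<times> 'l list \<Rightarrow>\<^sub>0 'k) \<Rightarrow> ('l list \<times> 'l list \<times> 'l list \<Rightarrow>\<^sub>0 'k)" where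
  "pmul3 f g = (\<Sum>p\<in>Poly_Mapping.keys f. \<Sum>r\<in>Poly_Mapping.keys g.
       Poly_Mapping.single (fst p @ fst r, fst (snd p) @ fst (snd r), snd (snd p) @ snd (snd r))
         (Poly_Mapping.lookup f p * Poly_Mapping.lookup g r))"

interpretation pmul3: basis_product
  "\<lambda>p r. (fst p @ fst r, fst (snd p) @ fst (snd r), snd (snd p) @ snd (snd r))" pmul3
  by unfold_locales (simp add: pmul3_def)

interpretation pmul_opposite: basis_product "\<lambda>u v. v @ u" "\<lambda>f g. pmul g f"
proof
  show "pmul g f = (\<Sum>u\<in>Poly_Mapping.keys f. \<Sum>v\<in>Poly_Mapping.keys g.
      Poly_Mapping.single (v @ u) (Poly_Mapping.lookup f u * Poly_Mapping.lookup g v))" for f g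
    unfolding pmul_def by (subst sum.swap) (simp add: mult.commute)
qed

locale monoid_basis_product = basis_product h prod
  for h :: "'u \<Rightarrow> 'u \<Rightarrow> 'u" and prod :: "('u \<Rightarrow>\<^sub>0 'k::comm_ring_1) \<Rightarrow> ('u \<Rightarrow>\<^sub>0 'k) \<Rightarrow> ('u \<Rightarrow>\<^sub>0 'k)" +
  fixes e :: 'u
  assumes h_assoc: "h (h a b) c = h a (h b c)"
    and h_left_unit: "h e a = a"
    and h_right_unit: "h a e = a"
begin

lemma assoc: "prod (prod f g) f' = prod f (prod g f')"
proof (induction f rule: poly_mapping_induct)
  case (single w1 c1)
  show ?case
  proof (induction g rule: poly_mapping_induct)
    case (single w2 c2)
    show ?case
      by (induction f' rule: poly_mapping_induct) (simp_all add: add_right h_assoc mult.assoc)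
  qed (simp_all add: add_left add_right)
qed (simp_all add: add_left)

lemma left_unit [simp]: "prod (Poly_Mapping.single e 1) f = f"
  by (induction f rule: poly_mapping_induct) (simp_all add: add_right h_left_unit)

lemma right_unit [simp]: "prod f (Poly_Mapping.single e 1) = f"
  by (induction f rule: poly_mapping_induct) (simp_all add: add_left h_right_unit)

end

interpretation pmul: monoid_basis_product append pmul "[]"
  by unfold_locales simp_all

interpretation pmul2: monoid_basis_product "\<lambda>p r. (fst p @ fst r, snd p @ snd r)" pmul2 "([], [])"
  by unfold_locales simp_all

lemma pmul_one [simp]: "pmul (wd []) f = f" "pmul f (wd []) = f"
  by (simp_all add: wd_eq_single)

lemma pmul2_one [simp]: "pmul2 (tens (wd []) (wd [])) f = f" "pmul2 f (tens (wd []) (wd [])) = f"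
  by (simp_all add: wd_eq_single)

lemma wd_append: "wd (u @ v) = pmul (wd u) (wd v)"
  by (simp add: wd_eq_single)

lemma basis_product_interchange:
  assumes X: "basis_product hX X" and Y: "basis_product hY Y" and Z: "basis_product hZ Z"
    and W: "basis_product hW W" and U: "basis_product hU U" and V: "basis_product hV V"
    and h: "\<And>a b c d. hX (hY a b) (hZ c d) = hW (hU a c) (hV b d)"
  shows "X (Y f g) (Z f' g') = W (U f f') (V g g')"
proof -
  note simps = basis_product.single[OF X] basis_product.single[OF Y] basis_product.single[OF Z]
    basis_product.single[OF W] basis_product.single[OF U] basis_product.single[OF V]
    basis_product.zero_left[OF X] basis_product.zero_left[OF Y] basis_product.zero_left[OF Z]
    basis_product.zero_left[OF W] basis_product.zero_left[OF U] basis_product.zero_left[OF V]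
    basis_product.zero_right[OF X] basis_product.zero_right[OF Y] basis_product.zero_right[OF Z]
    basis_product.zero_right[OF W] basis_product.zero_right[OF U] basis_product.zero_right[OF V]
    basis_product.add_left[OF X] basis_product.add_left[OF Y] basis_product.add_left[OF Z]
    basis_product.add_left[OF W] basis_product.add_left[OF U] basis_product.add_left[OF V]
    basis_product.add_right[OF X] basis_product.add_right[OF Y] basis_product.add_right[OF Z]
    basis_product.add_right[OF W] basis_product.add_right[OF U] basis_product.add_right[OF V]
  show ?thesis
  proof (induction f rule: poly_mapping_induct)
    case (single a ca)
    show ?case
    proof (induction g rule: poly_mapping_induct)
      case (single b cb)
      show ?case
      proof (induction f' rule: poly_mapping_induct)
        case (single c cc)
        show ?case
          by (induction g' rule: poly_mapping_induct) (simp_all add: simps h mult_ac)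
      qed (simp_all add: simps)
    qed (simp_all add: simps)
  qed (simp_all add: simps)
qed

lemma pmul2_tens: "pmul2 (tens a b) (tens c d) = tens (pmul a c) (pmul b d)"
  by (rule basis_product_interchange[OF pmul2.basis_product_axioms tens.basis_product_axioms
        tens.basis_product_axioms tens.basis_product_axioms pmul.basis_product_axioms
        pmul.basis_product_axioms]) simp

lemma pmul3_tens: "pmul3 (tens a B) (tens a' B') = tens (pmul a a') (pmul2 B B')"
  by (rule basis_product_interchange[OF pmul3.basis_product_axioms tens.basis_product_axioms
        tens.basis_product_axioms tens.basis_product_axioms pmul.basis_product_axioms
        pmul2.basis_product_axioms]) simp

lemma tensL_pmul2: "tensL (pmul2 A B) (pmul c d) = pmul3 (tensL A c) (tensL B d)"
  by (rule basis_product_interchange[OF tensL.basis_product_axioms pmul2.basis_product_axioms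
        pmul.basis_product_axioms pmul3.basis_product_axioms tensL.basis_product_axioms
        tensL.basis_product_axioms]) simp

lemma tens_pmul_pmul2: "tens (pmul a b) (pmul2 C E) = pmul3 (tens a C) (tens b E)"
  by (rule basis_product_interchange[OF tens.basis_product_axioms pmul.basis_product_axioms
        pmul2.basis_product_axioms pmul3.basis_product_axioms tens.basis_product_axioms
        tens.basis_product_axioms]) simp

lemma lext_basis_product_hom:
  assumes P: "basis_product hP P" and Q: "basis_product hQ Q"
    and hom: "\<And>a b. \<psi> (hP a b) = Q (\<psi> a) (\<psi> b)"
  shows "lext \<psi> (P f g) = Q (lext \<psi> f) (lext \<psi> g)"
proof (induction f rule: poly_mapping_induct)
  case (single a c)
  show ?case
    by (induction g rule: poly_mapping_induct)
       (simp_all add: basis_product.single[OF P] basis_product.add_right[OF P]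
         basis_product.zero_right[OF P] basis_product.zero_right[OF Q]
         basis_product.add_right[OF Q] basis_product.scale_left[OF Q]
         basis_product.scale_right[OF Q] hom lext.add mult.commute)
qed (simp_all add: basis_product.add_left[OF P] basis_product.add_left[OF Q] lext.add
    basis_product.zero_left[OF P] basis_product.zero_left[OF Q])

section \<open>The kernels of the quotient maps\<close>

lemma span_pm_eq_span: "span_pm S = smult_pm.span S"
proof
  show "span_pm S \<subseteq> smult_pm.span S"
  proof
    show "a \<in> smult_pm.span S" if "a \<in> span_pm S" for a
      using that by induction (simp_all add: smult_pm.span_zero smult_pm.span_base
          smult_pm.span_add smult_pm.span_scale)
  qed
  have "smult_pm.subspace (span_pm S)"
    by (auto simp: smult_pm.subspace_def intro: span_pm.intros)
  then show "smult_pm.span S \<subseteq> span_pm S"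
    by (metis smult_pm.span_minimal span_pm_base subsetI)
qed

lemma span_closed_under_module_hom:
  assumes "X \<in> smult_pm.span S" and "module_hom smult_pm smult_pm f" and "f ` S \<subseteq> smult_pm.span S"
  shows "f X \<in> smult_pm.span S"
proof -
  have "f X \<in> smult_pm.span (f ` S)"
    using assms(1) by (simp add: module_hom.span_image[OF assms(2)])
  also have "\<dots> \<subseteq> smult_pm.span S"
    using assms(3) by (simp add: smult_pm.span_minimal)
  finally show ?thesis .
qed

lemma subspace_ideal_gen: "smult_pm.subspace (ideal_gen G)"
  by (auto simp: smult_pm.subspace_def intro: ideal_gen.intros)

lemmas ideal_gen_diff = smult_pm.subspace_diff[OF subspace_ideal_gen]

lemma ideal_gen_pmul_left: "a \<in> ideal_gen G \<Longrightarrow> pmul f a \<in> ideal_gen G"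
proof (induction f rule: poly_mapping_induct)
  case (single w c)
  then have "smult_pm c (pmul (wd w) (pmul a (wd []))) \<in> ideal_gen G"
    by (intro ideal_gen_smult ideal_gen_mult)
  then show ?case
    by (simp add: wd_eq_single flip: pmul.scale_left)
qed (auto simp: pmul.add_left intro: ideal_gen.intros)

lemma ideal_gen_pmul_right: "a \<in> ideal_gen G \<Longrightarrow> pmul a f \<in> ideal_gen G"
proof (induction f rule: poly_mapping_induct)
  case (single w c)
  then have "smult_pm c (pmul (wd []) (pmul a (wd w))) \<in> ideal_gen G"
    by (intro ideal_gen_smult ideal_gen_mult)
  then show ?case
    by (simp add: wd_eq_single flip: pmul.scale_right)
qed (auto simp: pmul.add_right intro: ideal_gen.intros)

lemma ker2_eq_span: "ker2 J = smult_pm.span {tens a b | a b. a \<in> J \<or> b \<in> J}"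
  by (simp add: ker2_def span_pm_eq_span)

lemma ker3_eq_span: "ker3 J = smult_pm.span {tens a (tens b c) | a b c. a \<in> J \<or> b \<in> J \<or> c \<in> J}"
  by (simp add: ker3_def span_pm_eq_span)

lemma subspace_ker2: "smult_pm.subspace (ker2 J)"
  by (simp add: ker2_eq_span)

lemma subspace_ker3: "smult_pm.subspace (ker3 J)"
  by (simp add: ker3_eq_span)

lemmas ker2_zero = smult_pm.subspace_0[OF subspace_ker2]
lemmas ker2_add = smult_pm.subspace_add[OF subspace_ker2]
lemmas ker2_scale = smult_pm.subspace_scale[OF subspace_ker2]
lemmas ker3_zero = smult_pm.subspace_0[OF subspace_ker3]
lemmas ker3_add = smult_pm.subspace_add[OF subspace_ker3]
lemmas ker3_scale = smult_pm.subspace_scale[OF subspace_ker3]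

lemma tens_in_ker2: "a \<in> J \<or> b \<in> J \<Longrightarrow> tens a b \<in> ker2 J"
  unfolding ker2_eq_span by (rule smult_pm.span_base) blast

lemma tens_in_ker3: "a \<in> J \<or> b \<in> J \<or> c \<in> J \<Longrightarrow> tens a (tens b c) \<in> ker3 J"
  unfolding ker3_eq_span by (rule smult_pm.span_base) blast

lemma pmul2_in_ker2:
  assumes "X \<in> ker2 (ideal_gen G)"
  shows "pmul2 X Y \<in> ker2 (ideal_gen G)" and "pmul2 Y X \<in> ker2 (ideal_gen G)"
proof -
  have tensor_basis: "Poly_Mapping.single (u, v) c = tens (Poly_Mapping.single u c) (wd v)" for u v c
    by (simp add: wd_eq_single)
  have "pmul2 (tens a b) Y \<in> ker2 (ideal_gen G) \<and> pmul2 Y (tens a b) \<in> ker2 (ideal_gen G)"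
    if ab: "a \<in> ideal_gen G \<or> b \<in> ideal_gen G" for a b
  proof (induction Y rule: poly_mapping_induct)
    case (single w c)
    obtain u v where w: "w = (u, v)" by fastforce
    have "pmul a (Poly_Mapping.single u c) \<in> ideal_gen G \<or> pmul b (wd v) \<in> ideal_gen G"
      "pmul (Poly_Mapping.single u c) a \<in> ideal_gen G \<or> pmul (wd v) b \<in> ideal_gen G"
      using ab ideal_gen_pmul_left ideal_gen_pmul_right by blast+
    then show ?case
      unfolding w tensor_basis pmul2_tens by (simp add: tens_in_ker2)
  qed (auto simp: pmul2.add_left pmul2.add_right ker2_zero
      intro: ker2_add)
  then have "(\<lambda>x. pmul2 x Y) ` {tens a b | a b. a \<in> ideal_gen G \<or> b \<in> ideal_gen G} \<subseteq> ker2 (ideal_gen G)"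
    "(\<lambda>x. pmul2 Y x) ` {tens a b | a b. a \<in> ideal_gen G \<or> b \<in> ideal_gen G} \<subseteq> ker2 (ideal_gen G)"
    by blast+
  then show "pmul2 X Y \<in> ker2 (ideal_gen G)" "pmul2 Y X \<in> ker2 (ideal_gen G)"
    using assms unfolding ker2_eq_span
    by (auto intro: span_closed_under_module_hom pmul2.module_hom_left pmul2.module_hom_right)
qed

lemma pmul3_in_ker3:
  assumes "X \<in> ker3 (ideal_gen G)"
  shows "pmul3 X Y \<in> ker3 (ideal_gen G)" and "pmul3 Y X \<in> ker3 (ideal_gen G)"
proof -
  have tensor_basis:
    "Poly_Mapping.single (u, v, t) c = tens (Poly_Mapping.single u c) (tens (wd v) (wd t))" for u v t c
    by (simp add: wd_eq_single)
  have "pmul3 (tens a (tens b c)) Y \<in> ker3 (ideal_gen G) \<and> pmul3 Y (tens a (tens b c)) \<in> ker3 (ideal_gen G)"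
    if abc: "a \<in> ideal_gen G \<or> b \<in> ideal_gen G \<or> c \<in> ideal_gen G" for a b c
  proof (induction Y rule: poly_mapping_induct)
    case (single w d)
    obtain u v t where w: "w = (u, v, t)" by (cases w) fastforce
    have "pmul a (Poly_Mapping.single u d) \<in> ideal_gen G \<or> pmul b (wd v) \<in> ideal_gen G
        \<or> pmul c (wd t) \<in> ideal_gen G"
      "pmul (Poly_Mapping.single u d) a \<in> ideal_gen G \<or> pmul (wd v) b \<in> ideal_gen G
        \<or> pmul (wd t) c \<in> ideal_gen G"
      using abc ideal_gen_pmul_left ideal_gen_pmul_right by blast+
    then show ?case
      unfolding w tensor_basis pmul3_tens pmul2_tens by (simp add: tens_in_ker3)
  qed (auto simp: pmul3.add_left pmul3.add_right ker3_zero
      intro: ker3_add)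
  then have "(\<lambda>x. pmul3 x Y) ` {tens a (tens b c) | a b c. a \<in> ideal_gen G \<or> b \<in> ideal_gen G \<or> c \<in> ideal_gen G}
      \<subseteq> ker3 (ideal_gen G)"
    "(\<lambda>x. pmul3 Y x) ` {tens a (tens b c) | a b c. a \<in> ideal_gen G \<or> b \<in> ideal_gen G \<or> c \<in> ideal_gen G}
      \<subseteq> ker3 (ideal_gen G)"
    by blast+
  then show "pmul3 X Y \<in> ker3 (ideal_gen G)" "pmul3 Y X \<in> ker3 (ideal_gen G)"
    using assms unfolding ker3_eq_span
    by (auto intro: span_closed_under_module_hom pmul3.module_hom_left pmul3.module_hom_right)
qed

section \<open>The structure maps on the free algebra\<close>

definition lie_shift :: "'k::comm_ring_1 \<Rightarrow> ('a option list \<Rightarrow>\<^sub>0 'k) \<Rightarrow> ('a option list \<Rightarrow>\<^sub>0 'k)" where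
  "lie_shift k a = a + smult_pm k (pmul q6 a) - pmul a q6"

definition lie_comult :: "'k::comm_ring_1 \<Rightarrow> ('a option list \<Rightarrow>\<^sub>0 'k)
    \<Rightarrow> ('a option list \<times> 'a option list \<Rightarrow>\<^sub>0 'k)" where
  "lie_comult k a = tens (lie_shift k a) one6 + tens one6 (lie_shift k a)
     + smult_pm (1 - k) (tens (pmul q6 a) q6) + smult_pm (1 - k) (tens q6 (pmul q6 a))"

definition lie_antipode :: "'k::field \<Rightarrow> ('a option list \<Rightarrow>\<^sub>0 'k) \<Rightarrow> ('a option list \<Rightarrow>\<^sub>0 'k)" where
  "lie_antipode k a = smult_pm (- (1 / k)) a - smult_pm k (pmul q6 a) + smult_pm (1 / k) (pmul a q6)"

fun comult_letter :: "'k::comm_ring_1 \<Rightarrow> 'a option \<Rightarrow> ('a option list \<times> 'a option list \<Rightarrow>\<^sub>0 'k)" where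
  "comult_letter k None = tens q6 q6"
| "comult_letter k (Some x) = lie_comult k (lie6 x)"

primrec comult_word :: "'k::comm_ring_1 \<Rightarrow> 'a option list \<Rightarrow> ('a option list \<times> 'a option list \<Rightarrow>\<^sub>0 'k)" where
  "comult_word k [] = tens one6 one6"
| "comult_word k (l # w) = pmul2 (comult_letter k l) (comult_word k w)"

definition comult :: "'k::comm_ring_1 \<Rightarrow> ('a option list \<Rightarrow>\<^sub>0 'k) \<Rightarrow> ('a option list \<times> 'a option list \<Rightarrow>\<^sub>0 'k)" where
  "comult k = lext (comult_word k)"

fun counit_letter :: "'a option \<Rightarrow> 'k::comm_ring_1" where
  "counit_letter None = 1"
| "counit_letter (Some x) = 0"

definition counit_word :: "'a option list \<Rightarrow> 'k::comm_ring_1" where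
  "counit_word w = (\<Prod>l\<leftarrow>w. counit_letter l)"

definition counit :: "('a option list \<Rightarrow>\<^sub>0 'k::comm_ring_1) \<Rightarrow> 'k" where
  "counit f = (\<Sum>w\<in>Poly_Mapping.keys f. Poly_Mapping.lookup f w * counit_word w)"

fun antipode_letter :: "'k::field \<Rightarrow> 'a option \<Rightarrow> ('a option list \<Rightarrow>\<^sub>0 'k)" where
  "antipode_letter k None = one6 - q6"
| "antipode_letter k (Some x) = lie_antipode k (lie6 x)"

primrec antipode_word :: "'k::field \<Rightarrow> 'a option list \<Rightarrow> ('a option list \<Rightarrow>\<^sub>0 'k)" where
  "antipode_word k [] = one6"
| "antipode_word k (l # w) = pmul (antipode_word k w) (antipode_letter k l)"

definition antipode :: "'k::field \<Rightarrow> ('a option list \<Rightarrow>\<^sub>0 'k) \<Rightarrow> ('a option list \<Rightarrow>\<^sub>0 'k)" where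
  "antipode k = lext (antipode_word k)"

lemma comult_word_append: "comult_word k (u @ v) = pmul2 (comult_word k u) (comult_word k v)"
  by (induction u) (simp_all add: pmul2.assoc)

lemma antipode_word_append: "antipode_word k (u @ v) = pmul (antipode_word k v) (antipode_word k u)"
  by (induction u) (simp_all add: pmul.assoc)

lemma counit_word_append: "counit_word (u @ v) = counit_word u * counit_word v"
  by (simp add: counit_word_def)

interpretation comult: module_hom smult_pm smult_pm "comult k" for k
  unfolding comult_def by (rule lext.module_hom_axioms)

interpretation antipode: module_hom smult_pm smult_pm "antipode k" for k
  unfolding antipode_def by (rule lext.module_hom_axioms)

lemma counit_add: "counit (f + g) = counit f + counit g"
  unfolding counit_def by (rule sum_keys_add) (simp_all add: algebra_simps)

lemma counit_scale: "counit (smult_pm c f) = c * counit f"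
  unfolding counit_def sum_distrib_left
  by (simp add: mult.assoc) (rule sum.mono_neutral_left; auto simp: in_keys_iff simp flip: mult.assoc)

lemma counit_zero [simp]: "counit 0 = 0"
  by (simp add: counit_def)

lemma counit_diff: "counit (f - g) = counit f - counit g"
  using counit_add[of "f - g" g] by simp

text \<open>Deliberately not an interpretation: the simp rules of the scalar module on the
  field would loop against algebra_simps.\<close>

lemma module_hom_counit: "module_hom smult_pm (*) counit"
  by (intro module_hom.intro module_hom_axioms.intro smult_pm.module_axioms module_times
      counit_add counit_scale)

lemma comult_wd [simp]: "comult k (wd w) = comult_word k w"
  by (simp add: comult_def)

lemma antipode_wd [simp]: "antipode k (wd w) = antipode_word k w"
  by (simp add: antipode_def)

lemma comult_single [simp]: "comult k (Poly_Mapping.single w c) = smult_pm c (comult_word k w)"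
  by (simp add: comult_def)

lemma antipode_single [simp]: "antipode k (Poly_Mapping.single w c) = smult_pm c (antipode_word k w)"
  by (simp add: antipode_def)

lemma counit_single [simp]: "counit (Poly_Mapping.single w c) = c * counit_word w"
  by (cases "c = 0") (simp_all add: counit_def)

lemma counit_wd [simp]: "counit (wd w) = counit_word w"
  by (simp add: wd_eq_single)

lemma comult_pmul: "comult k (pmul a b) = pmul2 (comult k a) (comult k b)"
  unfolding comult_def
  by (rule lext_basis_product_hom[OF pmul.basis_product_axioms pmul2.basis_product_axioms])
     (rule comult_word_append)

lemma antipode_pmul: "antipode k (pmul a b) = pmul (antipode k b) (antipode k a)"
  unfolding antipode_def
  by (rule lext_basis_product_hom[OF pmul.basis_product_axioms pmul_opposite.basis_product_axioms])
     (rule antipode_word_append)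

lemma counit_pmul: "counit (pmul a b) = counit a * counit b"
proof (induction a rule: poly_mapping_induct)
  case (single w c)
  show ?case
  proof (induction b rule: poly_mapping_induct)
    case (single v d)
    show ?case by (simp add: counit_word_append)
  next
    case (add b b')
    then show ?case by (simp add: counit_add pmul.add_right distrib_left)
  qed simp
next
  case (add a a')
  then show ?case by (simp add: counit_add pmul.add_left distrib_right)
qed simp

section \<open>Normal forms modulo q u q = q u\<close>

text \<open>Modulo q u q = q u, every q after the first one can be deleted, since q u q v = q u v.\<close>

fun q_normal_form :: "'a option list \<Rightarrow> 'a option list" where
  "q_normal_form [] = []"
| "q_normal_form (None # w) = None # filter (\<lambda>l. l \<noteq> None) w"
| "q_normal_form (Some x # w) = Some x # q_normal_form w"

definition q_normalize :: "('a option list \<Rightarrow>\<^sub>0 'k::comm_ring_1) \<Rightarrow> ('a option list \<Rightarrow>\<^sub>0 'k)" where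
  "q_normalize = lext (\<lambda>w. wd (q_normal_form w))"

definition q_normalize2 :: "('a option list \<times> 'a option list \<Rightarrow>\<^sub>0 'k::comm_ring_1)
    \<Rightarrow> ('a option list \<times> 'a option list \<Rightarrow>\<^sub>0 'k)" where
  "q_normalize2 = lext (\<lambda>(u, v). wd (q_normal_form u, q_normal_form v))"

definition q_normalize3 :: "('a option list \<times> 'a option list \<times> 'a option list \<Rightarrow>\<^sub>0 'k::comm_ring_1)
    \<Rightarrow> ('a option list \<times> 'a option list \<times> 'a option list \<Rightarrow>\<^sub>0 'k)" where
  "q_normalize3 = lext (\<lambda>(u, v, t). wd (q_normal_form u, q_normal_form v, q_normal_form t))"

interpretation q_normalize: module_hom smult_pm smult_pm q_normalize
  unfolding q_normalize_def by (rule lext.module_hom_axioms)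

interpretation q_normalize2: module_hom smult_pm smult_pm q_normalize2
  unfolding q_normalize2_def by (rule lext.module_hom_axioms)

interpretation q_normalize3: module_hom smult_pm smult_pm q_normalize3
  unfolding q_normalize3_def by (rule lext.module_hom_axioms)

lemma q_normalize_single [simp]:
  "q_normalize (Poly_Mapping.single w c) = Poly_Mapping.single (q_normal_form w) c"
  "q_normalize2 (Poly_Mapping.single (u, v) c) = Poly_Mapping.single (q_normal_form u, q_normal_form v) c"
  "q_normalize3 (Poly_Mapping.single (u, v, t) c)
     = Poly_Mapping.single (q_normal_form u, q_normal_form v, q_normal_form t) c"
  by (simp_all add: q_normalize_def q_normalize2_def q_normalize3_def wd_eq_single)

interpretation sigma6: module_hom smult_pm smult_pm sigma6
  by unfold_locales (simp_all add: sigma6_def pmul.add_left pmul.add_right pmul.scale_left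
      pmul.scale_right smult_pm.scale_right_distrib smult_pm.scale_right_diff_distrib)

locale q_absorbing =
  fixes G :: "('a option list \<Rightarrow>\<^sub>0 'k::comm_ring_1) set"
  assumes q_absorb: "\<And>w. wd ([None] @ w @ [None]) - wd ([None] @ w) \<in> ideal_gen G"
begin

lemma q_absorb_later:
  "wd (None # u @ w) - wd (None # u @ filter (\<lambda>l. l \<noteq> None) w) \<in> ideal_gen G"
proof (induction w arbitrary: u)
  case Nil
  then show ?case by (simp add: ideal_gen_zero)
next
  case (Cons l w)
  show ?case
  proof (cases l)
    case None
    have "pmul (wd ([None] @ u @ [None]) - wd ([None] @ u)) (wd w) \<in> ideal_gen G"
      by (rule ideal_gen_pmul_right[OF q_absorb])
    then have "wd (None # u @ None # w) - wd (None # u @ w) \<in> ideal_gen G"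
      by (simp add: pmul.diff_left wd_eq_single)
    from ideal_gen_add[OF this Cons.IH[of u]] show ?thesis
      using None by simp
  next
    case (Some x)
    with Cons.IH[of "u @ [Some x]"] show ?thesis by simp
  qed
qed

lemma wd_q_normal_form: "wd w - wd (q_normal_form w) \<in> ideal_gen G"
proof (induction w rule: q_normal_form.induct)
  case (2 w)
  then show ?case using q_absorb_later[of "[]" w] by simp
next
  case (3 x w)
  then have "pmul (wd [Some x]) (wd w - wd (q_normal_form w)) \<in> ideal_gen G"
    by (rule ideal_gen_pmul_left)
  then show ?case by (simp add: pmul.diff_right wd_eq_single)
qed (simp add: ideal_gen_zero)

lemma q_normalize_congruent: "f - q_normalize f \<in> ideal_gen G"
proof (induction f rule: poly_mapping_induct)
  case (single w c)
  have "smult_pm c (wd w - wd (q_normal_form w)) \<in> ideal_gen G"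
    by (rule ideal_gen_smult[OF wd_q_normal_form])
  then show ?case by (simp add: smult_pm.scale_right_diff_distrib wd_eq_single)
next
  case (add a b)
  from ideal_gen_add[OF add] show ?case by (simp add: q_normalize.add algebra_simps)
qed (simp add: ideal_gen_zero)

lemma q_normalize2_congruent: "A - q_normalize2 A \<in> ker2 (ideal_gen G)"
proof (induction A rule: poly_mapping_induct)
  case (single w c)
  obtain u v where w: "w = (u, v)" by fastforce
  have "Poly_Mapping.single (u, v) c - Poly_Mapping.single (q_normal_form u, q_normal_form v) c
      = smult_pm c (tens (wd u - wd (q_normal_form u)) (wd v)
          + tens (wd (q_normal_form u)) (wd v - wd (q_normal_form v)))"
    by (simp add: tens.diff_left tens.diff_right wd_eq_single smult_pm.scale_right_diff_distrib)
  moreover have "\<dots> \<in> ker2 (ideal_gen G)"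
    by (intro ker2_scale ker2_add tens_in_ker2 disjI1 disjI2 wd_q_normal_form)
  ultimately show ?case by (simp add: w)
next
  case (add a b)
  from ker2_add[OF add] show ?case by (simp add: q_normalize2.add algebra_simps)
qed (simp add: ker2_zero)

lemma q_normalize3_congruent: "A - q_normalize3 A \<in> ker3 (ideal_gen G)"
proof (induction A rule: poly_mapping_induct)
  case (single w c)
  obtain u v t where w: "w = (u, v, t)" by (cases w) fastforce
  have "Poly_Mapping.single (u, v, t) c
        - Poly_Mapping.single (q_normal_form u, q_normal_form v, q_normal_form t) c
      = smult_pm c (tens (wd u - wd (q_normal_form u)) (tens (wd v) (wd t))
          + tens (wd (q_normal_form u)) (tens (wd v - wd (q_normal_form v)) (wd t))
          + tens (wd (q_normal_form u)) (tens (wd (q_normal_form v)) (wd t - wd (q_normal_form t))))"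
    by (simp add: tens.diff_left tens.diff_right wd_eq_single smult_pm.scale_right_diff_distrib)
  moreover have "\<dots> \<in> ker3 (ideal_gen G)"
    by (intro ker3_scale ker3_add tens_in_ker3 disjI1 disjI2 wd_q_normal_form)
  ultimately show ?case by (simp add: w)
next
  case (add a b)
  from ker3_add[OF add] show ?case by (simp add: q_normalize3.add algebra_simps)
qed (simp add: ker3_zero)

lemma in_ideal_if_q_normalize_eq_0:
  "q_normalize f = 0 \<Longrightarrow> f \<in> ideal_gen G"
  "q_normalize2 A = 0 \<Longrightarrow> A \<in> ker2 (ideal_gen G)"
  "q_normalize3 B = 0 \<Longrightarrow> B \<in> ker3 (ideal_gen G)"
  using q_normalize_congruent[of f] q_normalize2_congruent[of A] q_normalize3_congruent[of B]
  by simp_all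

lemma q_idempotent: "pmul q6 q6 - q6 \<in> ideal_gen G"
  using q_absorb[of "[]"] by (simp add: wd_eq_single)

lemma q_absorb_pmul: "pmul q6 (pmul a q6) - pmul q6 a \<in> ideal_gen G"
proof (induction a rule: poly_mapping_induct)
  case (single w c)
  have "smult_pm c (wd ([None] @ w @ [None]) - wd ([None] @ w)) \<in> ideal_gen G"
    by (rule ideal_gen_smult[OF q_absorb])
  then show ?case by (simp add: wd_eq_single smult_pm.scale_right_diff_distrib)
next
  case (add a b)
  from ideal_gen_add[OF add] show ?case
    by (simp add: pmul.add_left pmul.add_right algebra_simps)
qed (simp add: ideal_gen_zero)

lemma sigma6_pmul: "pmul (sigma6 a) (sigma6 b) - sigma6 (pmul a b) \<in> ideal_gen G"
proof -
  have "pmul (sigma6 a) (sigma6 b) - sigma6 (pmul a b)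
    = pmul (pmul q6 (pmul a q6) - pmul q6 a) b - (pmul q6 (pmul (pmul a b) q6) - pmul q6 (pmul a b))
      - pmul a (pmul (pmul q6 q6 - q6) b) + pmul a (pmul q6 (pmul b q6) - pmul q6 b)"
    by (simp add: sigma6_def pmul.add_left pmul.add_right pmul.diff_left pmul.diff_right
        pmul.assoc algebra_simps)
  also have "\<dots> \<in> ideal_gen G"
    by (intro ideal_gen_add ideal_gen_diff ideal_gen_pmul_right ideal_gen_pmul_left
        q_absorb_pmul q_idempotent)
  finally show ?thesis .
qed

lemma q_tensor_absorb_pmul2:
  "pmul2 (tens q6 q6) (pmul2 A (tens q6 q6)) - pmul2 (tens q6 q6) A \<in> ker2 (ideal_gen G)"
proof (induction A rule: poly_mapping_induct)
  case (single w c)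
  obtain u v where w: "w = (u, v)" by fastforce
  have "smult_pm c (tens (wd ([None] @ u @ [None]) - wd ([None] @ u)) (wd ([None] @ v @ [None]))
         + tens (wd ([None] @ u)) (wd ([None] @ v @ [None]) - wd ([None] @ v))) \<in> ker2 (ideal_gen G)"
    by (intro ker2_scale ker2_add tens_in_ker2 disjI1 disjI2 q_absorb)
  then show ?case
    by (simp add: w wd_eq_single smult_pm.scale_right_distrib smult_pm.scale_right_diff_distrib
        tens.diff_left tens.diff_right)
next
  case (add a b)
  from ker2_add[OF add] show ?case
    by (simp add: pmul2.add_left pmul2.add_right algebra_simps)
qed (simp add: ker2_zero)

lemma co_q_absorb_pmul:
  "pmul (one6 - q6) (pmul a (one6 - q6)) - pmul a (one6 - q6) \<in> ideal_gen G"
proof -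
  have "pmul (one6 - q6) (pmul a (one6 - q6)) - pmul a (one6 - q6) = pmul q6 (pmul a q6) - pmul q6 a"
    by (simp add: pmul.diff_left pmul.diff_right algebra_simps)
  then show ?thesis using q_absorb_pmul by simp
qed

end

section \<open>Computations on letters\<close>

text \<open>The generator of R attached to x, y is lie6 (br x y) minus this element.\<close>

definition twisted_commutator :: "'k::comm_ring_1 \<Rightarrow> 'a \<Rightarrow> 'a \<Rightarrow> ('a option list \<Rightarrow>\<^sub>0 'k)" where
  "twisted_commutator k x y = wd [Some x, Some y] - wd [Some y, Some x]
     - wd [Some x, Some y, None] + wd [Some y, Some x, None]
     + smult_pm k (wd [Some x, None, Some y]) - smult_pm k (wd [Some y, None, Some x])"

lemmas expand_linear =
  pmul.add_left pmul.add_right pmul.diff_left pmul.diff_right pmul.scale_left pmul.scale_right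
  pmul.minus_left pmul.minus_right
  tens.add_left tens.add_right tens.diff_left tens.diff_right tens.scale_left tens.scale_right
  tens.minus_left tens.minus_right
  tensL.add_left tensL.add_right tensL.diff_left tensL.diff_right tensL.scale_left tensL.scale_right
  pmul2.add_left pmul2.add_right pmul2.diff_left pmul2.diff_right pmul2.scale_left pmul2.scale_right
  smult_pm.scale_right_distrib smult_pm.scale_right_diff_distrib smult_pm.scale_minus_right
  lext.add lext.diff lext.scale lext.neg
  q_normalize.add q_normalize.diff q_normalize.scale q_normalize.neg
  q_normalize2.add q_normalize2.diff q_normalize2.scale q_normalize2.neg
  q_normalize3.add q_normalize3.diff q_normalize3.scale q_normalize3.neg
  comult.add comult.diff comult.scale antipode.add antipode.diff antipode.scale
  counit_add counit_diff counit_scale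

lemmas expand_defs = lie_shift_def lie_comult_def lie_antipode_def sigma6_def twisted_commutator_def
  wd_eq_single counit_word_def

text \<open>Coefficients are compared as polynomials in the atoms kronecker w z, because words such as
  [Some x] and [Some y] may or may not coincide.\<close>

definition kronecker :: "'w \<Rightarrow> 'w \<Rightarrow> 'k::comm_ring_1" where
  "kronecker w z = (1 when w = z)"

lemma when_eq_kronecker: "(c when w = z) = c * kronecker w z"
  by (simp add: kronecker_def when_def)

lemmas compare_coefficients = lookup_add lookup_minus lookup_single when_eq_kronecker

lemma comult_twisted_commutator:
  "q_normalize2 (lie_comult k (twisted_commutator k x y) - comult k (twisted_commutator k x y)) = 0"
  by (simp add: expand_defs expand_linear)
     (rule poly_mapping_eqI, simp add: compare_coefficients algebra_simps)

lemma antipode_twisted_commutator: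
  assumes "k \<noteq> 0"
  shows "q_normalize (lie_antipode k (twisted_commutator k x y) - antipode k (twisted_commutator k x y)) = 0"
  using assms by (simp add: expand_defs expand_linear)
     (rule poly_mapping_eqI, simp add: compare_coefficients algebra_simps)

lemma antipode_left_letter:
  assumes "k \<noteq> 0"
  shows "q_normalize (lext (\<lambda>(u, v). pmul (antipode k (wd u)) (wd v)) (comult_letter k l)) = 0"
  using assms by (cases l; simp add: expand_defs expand_linear)
     (rule poly_mapping_eqI, simp add: compare_coefficients algebra_simps)+

lemma antipode_right_letter:
  assumes "k \<noteq> 0"
  shows "q_normalize (lext (\<lambda>(u, v). pmul (wd u) (antipode k (wd v))) (comult_letter k l)) = 0"
  using assms by (cases l; simp add: expand_defs expand_linear)
     (rule poly_mapping_eqI, simp add: compare_coefficients algebra_simps)+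

lemma coassociative_letter:
  "q_normalize3 (lext (\<lambda>(u, v). tensL (comult k (wd u)) (wd v)) (comult_letter k l)
     - lext (\<lambda>(u, v). tens (wd u) (comult k (wd v))) (comult_letter k l)) = 0"
  by (cases l; simp add: expand_defs expand_linear)
     (rule poly_mapping_eqI, simp add: compare_coefficients algebra_simps)+

lemma counit_left_letter:
  "q_normalize (lext (\<lambda>(u, v). smult_pm (counit (wd u)) (wd v)) (comult_letter k l) - sigma6 (wd [l])) = 0"
  by (cases l; simp add: expand_defs expand_linear)
     (rule poly_mapping_eqI, simp add: compare_coefficients algebra_simps)+

section \<open>The structure maps respect the defining ideal\<close>

interpretation env6: q_absorbing "env6_gens scale br k" for scale br k
  by unfold_locales (rule ideal_gen_base, unfold env6_gens_def, blast)

interpretation lie_comult: module_hom smult_pm smult_pm "lie_comult k" for k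
  by unfold_locales (simp_all add: lie_comult_def lie_shift_def expand_linear algebra_simps)

interpretation lie_antipode: module_hom smult_pm smult_pm "lie_antipode k" for k
  by unfold_locales (simp_all add: lie_antipode_def expand_linear algebra_simps)

lemma lie_comult_in_ker2: "a \<in> ideal_gen G \<Longrightarrow> lie_comult k a \<in> ker2 (ideal_gen G)"
  unfolding lie_comult_def lie_shift_def
  by (intro ker2_add ker2_scale tens_in_ker2 disjI1 disjI2 ideal_gen_diff ideal_gen_add
      ideal_gen_smult ideal_gen_pmul_left ideal_gen_pmul_right)

lemma lie_antipode_in_ideal: "a \<in> ideal_gen G \<Longrightarrow> lie_antipode k a \<in> ideal_gen G"
  unfolding lie_antipode_def
  by (intro ideal_gen_add ideal_gen_diff ideal_gen_smult ideal_gen_pmul_left ideal_gen_pmul_right)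

lemma env6_gens_cases:
  assumes "g \<in> env6_gens scale br k"
  obtains (additive) x y where "g = lie6 (x + y) - lie6 x - lie6 y"
  | (homogeneous) c x where "g = lie6 (scale c x) - smult_pm c (lie6 x)"
  | (q_absorb) w where "g = wd ([None] @ w @ [None]) - wd ([None] @ w)"
  | (bracket) x y where "g = lie6 (br x y) - twisted_commutator k x y"
proof -
  have "g = lie6 (br x y) - twisted_commutator k x y" if
    "g = lie6 (br x y) - wd [Some x, Some y] + wd [Some y, Some x]
        + wd [Some x, Some y, None] - wd [Some y, Some x, None]
        - smult_pm k (wd [Some x, None, Some y]) + smult_pm k (wd [Some y, None, Some x])" for x y
    using that by (simp add: twisted_commutator_def algebra_simps)
  with assms that show ?thesis unfolding env6_gens_def by blast
qed

lemma comult_env6_gen: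
  assumes g: "g \<in> env6_gens scale br k"
  shows "comult k g \<in> ker2 (env6_ker scale br k)"
  using g
proof (cases rule: env6_gens_cases)
  case additive
  then have "comult k g = lie_comult k g" by (simp add: comult.diff lie_comult.diff)
  with g show ?thesis by (simp add: lie_comult_in_ker2 ideal_gen_base env6_ker_def)
next
  case homogeneous
  then have "comult k g = lie_comult k g"
    by (simp add: comult.diff comult.scale lie_comult.diff lie_comult.scale)
  with g show ?thesis by (simp add: lie_comult_in_ker2 ideal_gen_base env6_ker_def)
next
  case (q_absorb w)
  then show ?thesis
    using env6.q_tensor_absorb_pmul2 by (simp add: comult.diff comult_word_append env6_ker_def)
next
  case (bracket x y)
  then have "comult k g = lie_comult k g
      + (lie_comult k (twisted_commutator k x y) - comult k (twisted_commutator k x y))"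
    by (simp add: comult.diff lie_comult.diff)
  moreover have "lie_comult k (twisted_commutator k x y) - comult k (twisted_commutator k x y)
      \<in> ker2 (env6_ker scale br k)"
    unfolding env6_ker_def
    by (rule env6.in_ideal_if_q_normalize_eq_0) (rule comult_twisted_commutator)
  ultimately show ?thesis
    using g by (simp add: ker2_add lie_comult_in_ker2 ideal_gen_base env6_ker_def)
qed

lemma antipode_env6_gen:
  assumes g: "g \<in> env6_gens scale br k" and k: "k \<noteq> 0"
  shows "antipode k g \<in> env6_ker scale br k"
  using g
proof (cases rule: env6_gens_cases)
  case additive
  then have "antipode k g = lie_antipode k g" by (simp add: antipode.diff lie_antipode.diff)
  with g show ?thesis by (simp add: lie_antipode_in_ideal ideal_gen_base env6_ker_def)
next
  case homogeneous
  then have "antipode k g = lie_antipode k g"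
    by (simp add: antipode.diff antipode.scale lie_antipode.diff lie_antipode.scale)
  with g show ?thesis by (simp add: lie_antipode_in_ideal ideal_gen_base env6_ker_def)
next
  case (q_absorb w)
  then show ?thesis
    using env6.co_q_absorb_pmul
    by (simp add: antipode.diff antipode_word_append pmul.assoc env6_ker_def)
next
  case (bracket x y)
  then have "antipode k g = lie_antipode k g
      + (lie_antipode k (twisted_commutator k x y) - antipode k (twisted_commutator k x y))"
    by (simp add: antipode.diff lie_antipode.diff)
  moreover have "lie_antipode k (twisted_commutator k x y) - antipode k (twisted_commutator k x y)
      \<in> env6_ker scale br k"
    unfolding env6_ker_def
    by (rule env6.in_ideal_if_q_normalize_eq_0) (rule antipode_twisted_commutator[OF k])
  ultimately show ?thesis
    using g by (simp add: ideal_gen_add lie_antipode_in_ideal ideal_gen_base env6_ker_def)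
qed

lemma counit_env6_gen:
  assumes "g \<in> env6_gens scale br k"
  shows "counit g = 0"
  using assms
  by (cases rule: env6_gens_cases)
     (simp_all add: counit_diff counit_scale counit_word_def twisted_commutator_def counit_add)

lemma comult_env6_ker: "a \<in> env6_ker scale br k \<Longrightarrow> comult k a \<in> ker2 (env6_ker scale br k)"
  unfolding env6_ker_def
  by (induction a rule: ideal_gen.induct)
     (simp_all add: comult_env6_gen[unfolded env6_ker_def] ker2_zero ker2_add ker2_scale
       comult.add comult.scale comult_pmul pmul2_in_ker2)

lemma antipode_env6_ker:
  assumes "k \<noteq> 0" and "a \<in> env6_ker scale br k"
  shows "antipode k a \<in> env6_ker scale br k"
  using assms(2) unfolding env6_ker_def
  by (induction a rule: ideal_gen.induct)
     (simp_all add: antipode_env6_gen[OF _ assms(1), unfolded env6_ker_def] ideal_gen.intros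
       antipode.add antipode.scale antipode_pmul ideal_gen_pmul_left ideal_gen_pmul_right)

lemma counit_env6_ker: "a \<in> env6_ker scale br k \<Longrightarrow> counit a = 0"
  unfolding env6_ker_def
  by (induction a rule: ideal_gen.induct)
     (simp_all add: counit_env6_gen counit_add counit_scale counit_pmul)

section \<open>The bialgebra and antipode identities\<close>

definition tensor_swap :: "('u \<times> 'v \<Rightarrow>\<^sub>0 'k::comm_ring_1) \<Rightarrow> ('v \<times> 'u \<Rightarrow>\<^sub>0 'k)" where
  "tensor_swap = lext (\<lambda>(u, v). wd (v, u))"

interpretation tensor_swap: module_hom smult_pm smult_pm tensor_swap
  unfolding tensor_swap_def by (rule lext.module_hom_axioms)

lemma tensor_swap_tens: "tensor_swap (tens a b) = tens b a"
proof (induction a rule: poly_mapping_induct)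
  case (single u c)
  show ?case
    by (induction b rule: poly_mapping_induct)
       (simp_all add: tensor_swap_def wd_eq_single tens.add_left tens.add_right lext.add mult.commute)
qed (simp_all add: tensor_swap_def tens.add_left tens.add_right lext.add)

lemma tensor_swap_pmul2: "tensor_swap (pmul2 A B) = pmul2 (tensor_swap A) (tensor_swap B)"
  unfolding tensor_swap_def
  by (rule lext_basis_product_hom[OF pmul2.basis_product_axioms pmul2.basis_product_axioms])
     (simp add: wd_eq_single split: prod.split)

lemma lext_tensor_swap: "lext \<phi> (tensor_swap X) = lext (\<lambda>(u, v). \<phi> (v, u)) X"
  by (induction X rule: poly_mapping_induct) (auto simp: tensor_swap_def lext.add wd_eq_single)

lemma comult_cocommutative: "tensor_swap (comult k h) = comult k h"
proof -
  have letter: "tensor_swap (comult_letter k l) = comult_letter k l" for l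
    by (cases l) (simp_all add: lie_comult_def tensor_swap.add tensor_swap.scale tensor_swap_tens
        add_ac)
  have word: "tensor_swap (comult_word k w) = comult_word k w" for w
    by (induction w) (simp_all add: tensor_swap_tens tensor_swap_pmul2 letter)
  show ?thesis
    by (induction h rule: poly_mapping_induct)
       (simp_all add: word comult.add tensor_swap.add tensor_swap.scale)
qed

lemma counit_left_word:
  "lext (\<lambda>(u, v). smult_pm (counit (wd u)) (wd v)) (comult_word k w) - sigma6 (wd w)
     \<in> env6_ker scale br k"
proof (induction w)
  case Nil
  then show ?case by (simp add: sigma6_def counit_word_def env6_ker_def ideal_gen_zero wd_eq_single)
next
  case (Cons l w)
  let ?E = "lext (\<lambda>(u, v). smult_pm (counit (wd u)) (wd v))"
  let ?a = "?E (comult_letter k l)" and ?b = "?E (comult_word k w)"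
  have hom: "?E (pmul2 A B) = pmul (?E A) (?E B)" for A B
    by (rule lext_basis_product_hom[OF pmul2.basis_product_axioms pmul.basis_product_axioms])
       (simp add: wd_eq_single counit_word_append mult.commute split: prod.split)
  have "?E (comult_word k (l # w)) - sigma6 (wd (l # w))
      = pmul (?a - sigma6 (wd [l])) ?b + pmul (sigma6 (wd [l])) (?b - sigma6 (wd w))
        + (pmul (sigma6 (wd [l])) (sigma6 (wd w)) - sigma6 (pmul (wd [l]) (wd w)))"
    unfolding comult_word.simps hom by (simp add: pmul.diff_left pmul.diff_right flip: wd_append)
  also have "\<dots> \<in> env6_ker scale br k"
  proof -
    have "?a - sigma6 (wd [l]) \<in> env6_ker scale br k"
      unfolding env6_ker_def
      by (rule env6.in_ideal_if_q_normalize_eq_0) (rule counit_left_letter)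
    with Cons.IH show ?thesis
      unfolding env6_ker_def
      by (intro ideal_gen_add ideal_gen_pmul_right ideal_gen_pmul_left env6.sigma6_pmul)
  qed
  finally show ?case .
qed

lemma counit_left: "lext (\<lambda>(u, v). smult_pm (counit (wd u)) (wd v)) (comult k h) - sigma6 h
    \<in> env6_ker scale br k"
  unfolding env6_ker_def
proof (induction h rule: poly_mapping_induct)
  case (single w c)
  have "Poly_Mapping.single w c = smult_pm c (wd w)" by (simp add: wd_eq_single)
  with ideal_gen_smult[OF counit_left_word[of k w, unfolded env6_ker_def], of c] show ?case
    by (simp add: comult.scale lext.scale sigma6.scale smult_pm.scale_right_diff_distrib)
next
  case (add a b)
  from ideal_gen_add[OF add] show ?case
    by (simp add: comult.add lext.add sigma6.add algebra_simps)
qed (simp add: ideal_gen_zero)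

lemma counit_right: "lext (\<lambda>(u, v). smult_pm (counit (wd v)) (wd u)) (comult k h) - sigma6 h
    \<in> env6_ker scale br k"
proof -
  have "lext (\<lambda>(u, v). smult_pm (counit (wd v)) (wd u)) (comult k h)
      = lext (\<lambda>(u, v). smult_pm (counit (wd v)) (wd u)) (tensor_swap (comult k h))"
    by (simp only: comult_cocommutative)
  also have "\<dots> = lext (\<lambda>(u, v). smult_pm (counit (wd u)) (wd v)) (comult k h)"
    by (simp add: lext_tensor_swap)
  finally show ?thesis using counit_left by simp
qed

lemma coassociative_word:
  "lext (\<lambda>(u, v). tensL (comult k (wd u)) (wd v)) (comult_word k w)
     - lext (\<lambda>(u, v). tens (wd u) (comult k (wd v))) (comult_word k w) \<in> ker3 (env6_ker scale br k)"
proof (induction w)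
  case Nil
  then show ?case by (simp add: wd_eq_single ker3_zero)
next
  case (Cons l w)
  let ?L = "lext (\<lambda>(u, v). tensL (comult k (wd u)) (wd v))"
  let ?R = "lext (\<lambda>(u, v). tens (wd u) (comult k (wd v)))"
  have hom: "?L (pmul2 A B) = pmul3 (?L A) (?L B)" "?R (pmul2 A B) = pmul3 (?R A) (?R B)" for A B
    by (rule lext_basis_product_hom[OF pmul2.basis_product_axioms pmul3.basis_product_axioms];
        simp add: comult_word_append wd_append tensL_pmul2 tens_pmul_pmul2 split: prod.split)+
  have "?L (comult_letter k l) - ?R (comult_letter k l) \<in> ker3 (env6_ker scale br k)"
    unfolding env6_ker_def
    by (rule env6.in_ideal_if_q_normalize_eq_0) (rule coassociative_letter)
  then have "pmul3 (?L (comult_letter k l) - ?R (comult_letter k l)) (?L (comult_word k w))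
      + pmul3 (?R (comult_letter k l)) (?L (comult_word k w) - ?R (comult_word k w))
      \<in> ker3 (env6_ker scale br k)"
    using Cons.IH unfolding env6_ker_def by (intro ker3_add pmul3_in_ker3)
  then show ?case
    unfolding comult_word.simps hom by (simp add: pmul3.diff_left pmul3.diff_right)
qed

lemma coassociative:
  "lext (\<lambda>(u, v). tensL (comult k (wd u)) (wd v)) (comult k h)
     - lext (\<lambda>(u, v). tens (wd u) (comult k (wd v))) (comult k h) \<in> ker3 (env6_ker scale br k)"
proof (induction h rule: poly_mapping_induct)
  case (single w c)
  from ker3_scale[OF coassociative_word[of k w], of c] show ?case
    by (simp add: lext.scale smult_pm.scale_right_diff_distrib)
next
  case (add a b)
  from ker3_add[OF add] show ?case
    by (simp add: comult.add lext.add algebra_simps)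
qed (simp add: ker3_zero)

lemma counit_antipode_letter: "counit (antipode_letter k l) = 0"
  by (cases l) (simp_all add: lie_antipode_def counit_diff counit_add counit_scale counit_word_def
      wd_eq_single)

lemma antipode_left_pmul2:
  "lext (\<lambda>(u, v). pmul (antipode k (wd u)) (wd v)) (pmul2 A B)
   = lext (\<lambda>(u, v). pmul (antipode k (wd u))
        (pmul (lext (\<lambda>(u, v). pmul (antipode k (wd u)) (wd v)) A) (wd v))) B"
proof (induction B rule: poly_mapping_induct)
  case (single w c)
  obtain a b where w: "w = (a, b)" by fastforce
  show ?case
  proof (induction A rule: poly_mapping_induct)
    case (single w' c')
    obtain a' b' where "w' = (a', b')" by fastforce
    with w show ?case
      by (simp add: antipode_word_append wd_append pmul.scale_left pmul.scale_right pmul.assoc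
          mult.commute)
  qed (simp_all add: w pmul2.add_left lext.add pmul.add_left pmul.add_right
      smult_pm.scale_right_distrib)
qed (simp_all add: pmul2.add_right lext.add)

lemma antipode_right_pmul2:
  "lext (\<lambda>(u, v). pmul (wd u) (antipode k (wd v))) (pmul2 A B)
   = lext (\<lambda>(u, v). pmul (wd u)
        (pmul (lext (\<lambda>(u, v). pmul (wd u) (antipode k (wd v))) B) (antipode k (wd v)))) A"
proof (induction A rule: poly_mapping_induct)
  case (single w c)
  obtain a b where w: "w = (a, b)" by fastforce
  show ?case
  proof (induction B rule: poly_mapping_induct)
    case (single w' c')
    obtain a' b' where "w' = (a', b')" by fastforce
    with w show ?case
      by (simp add: antipode_word_append wd_append pmul.scale_left pmul.scale_right pmul.assoc
          mult.commute)
  qed (simp_all add: w pmul2.add_right lext.add pmul.add_left pmul.add_right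
      smult_pm.scale_right_distrib)
qed (simp_all add: pmul2.add_left lext.add)

lemma lext_sandwich_in_ideal:
  assumes "z \<in> ideal_gen G"
  shows "lext (\<lambda>(u, v). pmul (f u) (pmul z (g v))) B \<in> ideal_gen G"
proof (induction B rule: poly_mapping_induct)
  case (single w c)
  obtain u v where "w = (u, v)" by fastforce
  then show ?case
    using assms by (simp add: ideal_gen_smult ideal_gen_pmul_left ideal_gen_pmul_right)
qed (simp_all add: lext.add ideal_gen_zero ideal_gen_add)

lemma antipode_left_word:
  assumes "k \<noteq> 0"
  shows "lext (\<lambda>(u, v). pmul (antipode k (wd u)) (wd v)) (comult_word k w)
     - smult_pm (counit (antipode_word k w)) one6 \<in> env6_ker scale br k"
proof (cases w)
  case Nil
  then show ?thesis by (simp add: wd_eq_single counit_word_def env6_ker_def ideal_gen_zero)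
next
  case (Cons l w')
  have "lext (\<lambda>(u, v). pmul (antipode k (wd u)) (wd v)) (comult_letter k l) \<in> env6_ker scale br k"
    unfolding env6_ker_def
    by (rule env6.in_ideal_if_q_normalize_eq_0) (rule antipode_left_letter[OF assms])
  then show ?thesis
    unfolding Cons comult_word.simps antipode_left_pmul2 env6_ker_def
    by (simp add: lext_sandwich_in_ideal counit_pmul counit_antipode_letter)
qed

lemma antipode_right_word:
  assumes "k \<noteq> 0"
  shows "lext (\<lambda>(u, v). pmul (wd u) (antipode k (wd v))) (comult_word k w)
     - smult_pm (counit (antipode_word k w)) one6 \<in> env6_ker scale br k"
proof (cases w rule: rev_cases)
  case Nil
  then show ?thesis by (simp add: wd_eq_single counit_word_def env6_ker_def ideal_gen_zero)
next
  case (snoc w' l)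
  have "lext (\<lambda>(u, v). pmul (wd u) (antipode k (wd v))) (comult_letter k l) \<in> env6_ker scale br k"
    unfolding env6_ker_def
    by (rule env6.in_ideal_if_q_normalize_eq_0) (rule antipode_right_letter[OF assms])
  then show ?thesis
    unfolding snoc comult_word_append antipode_word_append antipode_right_pmul2 env6_ker_def
    by (simp add: lext_sandwich_in_ideal counit_pmul counit_antipode_letter)
qed

lemma antipode_left:
  assumes "k \<noteq> 0"
  shows "lext (\<lambda>(u, v). pmul (antipode k (wd u)) (wd v)) (comult k h)
     - smult_pm (counit (antipode k h)) one6 \<in> env6_ker scale br k"
  unfolding env6_ker_def
proof (induction h rule: poly_mapping_induct)
  case (single w c)
  from ideal_gen_smult[OF antipode_left_word[OF assms, of w, unfolded env6_ker_def], of c] show ?case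
    by (simp add: lext.scale counit_scale smult_pm.scale_right_diff_distrib)
next
  case (add a b)
  from ideal_gen_add[OF add] show ?case
    by (simp add: comult.add antipode.add lext.add counit_add smult_pm.scale_left_distrib algebra_simps)
qed (simp add: ideal_gen_zero)

lemma antipode_right:
  assumes "k \<noteq> 0"
  shows "lext (\<lambda>(u, v). pmul (wd u) (antipode k (wd v))) (comult k h)
     - smult_pm (counit (antipode k h)) one6 \<in> env6_ker scale br k"
  unfolding env6_ker_def
proof (induction h rule: poly_mapping_induct)
  case (single w c)
  from ideal_gen_smult[OF antipode_right_word[OF assms, of w, unfolded env6_ker_def], of c] show ?case
    by (simp add: lext.scale counit_scale smult_pm.scale_right_diff_distrib)
next
  case (add a b)
  from ideal_gen_add[OF add] show ?case
    by (simp add: comult.add antipode.add lext.add counit_add smult_pm.scale_left_distrib algebra_simps)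
qed (simp add: ideal_gen_zero)

theorem proposition4p1:
  fixes scale :: "'k::field \<Rightarrow> 'a::ab_group_add \<Rightarrow> 'a"
    and br :: "'a \<Rightarrow> 'a \<Rightarrow> 'a"
    and k :: 'k
  assumes "lie_algebra scale br"
    and "k \<noteq> 0"
  shows "\<exists>(D :: ('a option list \<Rightarrow>\<^sub>0 'k) \<Rightarrow> ('a option list \<times> 'a option list \<Rightarrow>\<^sub>0 'k))
            (e :: ('a option list \<Rightarrow>\<^sub>0 'k) \<Rightarrow> 'k)
            (S :: ('a option list \<Rightarrow>\<^sub>0 'k) \<Rightarrow> ('a option list \<Rightarrow>\<^sub>0 'k)).
     well_defined_maps (env6_ker scale br k) D e S
   \<and> bialgebra_sigma_counit (env6_ker scale br k) D e sigma6
   \<and> antipode6_like (env6_ker scale br k) D e S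
   \<and> D q6 - tens q6 q6 \<in> ker2 (env6_ker scale br k)
   \<and> (\<forall>x. D (lie6 x)
          - (tens (lie6 x + smult_pm k (wd [None, Some x]) - wd [Some x, None]) one6
             + tens one6 (lie6 x + smult_pm k (wd [None, Some x]) - wd [Some x, None])
             + smult_pm (1 - k) (tens (wd [None, Some x]) q6)
             + smult_pm (1 - k) (tens q6 (wd [None, Some x])))
          \<in> ker2 (env6_ker scale br k))
   \<and> e q6 = 1
   \<and> (\<forall>x. e (lie6 x) = 0)
   \<and> S q6 - (one6 - q6) \<in> env6_ker scale br k
   \<and> (\<forall>x. S (lie6 x)
          - (smult_pm (- (1 / k)) (lie6 x) - smult_pm k (wd [None, Some x])
             + smult_pm (1 / k) (wd [Some x, None]))
          \<in> env6_ker scale br k)"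
proof -
  note k = \<open>k \<noteq> 0\<close>
  have zero: "0 \<in> env6_ker scale br k"
    by (simp add: env6_ker_def ideal_gen_zero)
  have "well_defined_maps (env6_ker scale br k) (comult k) counit (antipode k)"
    unfolding well_defined_maps_def
    by (intro conjI ballI linear_module_homI comult.module_hom_axioms module_hom_counit
        antipode.module_hom_axioms comult_env6_ker counit_env6_ker antipode_env6_ker[OF k])
  moreover have "bialgebra_sigma_counit (env6_ker scale br k) (comult k) counit sigma6"
    unfolding bialgebra_sigma_counit_def
    by (intro conjI allI coassociative counit_left counit_right)
       (simp_all add: zero ker2_zero pmul.assoc comult_pmul counit_pmul wd_eq_single counit_word_def)
  moreover have "antipode6_like (env6_ker scale br k) (comult k) counit (antipode k)"
    unfolding antipode6_like_def by (intro conjI allI antipode_left[OF k] antipode_right[OF k])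
  ultimately show ?thesis
    by (intro exI[of _ "comult k"] exI[of _ counit] exI[of _ "antipode k"])
       (simp add: zero ker2_zero lie_comult_def lie_shift_def lie_antipode_def counit_word_def
         wd_eq_single)
qed

end
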